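(* Let $n\ge 2$, $N>0$, $B>0$, $\alpha>1$, $0<\beta<1$ and unit prices $\lambda_1,\dots,\lambda_n>0$. Consider the two-stage Stackelberg game in which the platform (leader) chooses a reward $R\in[0,B]$, and then miners $s_1,\dots,s_n$ (followers) play the miners' game in which $s_i$ chooses $\mu_i\ge0$ with profit $P_i=\frac{\mu_i}{\sum_{j}\mu_j}RN-\lambda_i\mu_i$ (the fraction being $0$ if $\sum_j\mu_j=0$). The platform's utility is $$U(R,\boldsymbol{\mu})=\alpha\left[\sigma\Big(\beta\sum_{i=1}^n\mu_i\Big)-\tfrac12\right]-R,\qquad \sigma(x)=\frac{1}{1+e^{-x}}.$$ Then there exists a unique Stackelberg equilibrium $(\boldsymbol{\mu}^*,R^* )$ of this game.
   Context: For each $R\in[0,B]$ the miners' game has a unique Nash equilibrium $\boldsymbol{\mu}^{NE}(R)$ (a profile with $\mu_i\ge0$ from which no miner can strictly increase its profit by a unilateral deviation to another $\mu_i\ge 0$). A Stackelberg equilibrium is a pair $(\boldsymbol{\mu}^*,R^* )$ with $R^*\in[0,B]$ such that $\boldsymbol{\mu}^*=\boldsymbol{\mu}^{NE}(R^* )$ (i.e. $P_i(\mu_i^*\mid\boldsymbol{\mu}^*_{-i},R^* )\ge P_i(\mu_i\mid\boldsymbol{\mu}^*_{-i},R^* )$ for all $i$ and all $\mu_i\ge0$) and $U(R^*,\boldsymbol{\mu}^{NE}(R^* ))\ge U(R,\boldsymbol{\mu}^{NE}(R))$ for all $R\in[0,B]$. *)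

theory Defs
  imports Complex_Main "HOL-Library.Cardinality"
begin

text \<open>Miners are indexed by a finite type 'n (n = CARD('n)); a strategy profile is
  a function mu :: 'n => real.\<close>

definition share :: "('n::finite \<Rightarrow> real) \<Rightarrow> 'n \<Rightarrow> real" where
  "share mu i = (if (\<Sum>j\<in>UNIV. mu j) = 0 then 0 else mu i / (\<Sum>j\<in>UNIV. mu j))"

definition profit :: "real \<Rightarrow> ('n::finite \<Rightarrow> real) \<Rightarrow> real \<Rightarrow> ('n \<Rightarrow> real) \<Rightarrow> 'n \<Rightarrow> real" where
  "profit N lam R mu i = share mu i * R * N - lam i * mu i"

definition is_NE :: "real \<Rightarrow> ('n::finite \<Rightarrow> real) \<Rightarrow> real \<Rightarrow> ('n \<Rightarrow> real) \<Rightarrow> bool" where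
  "is_NE N lam R mu \<longleftrightarrow> (\<forall>i. mu i \<ge> 0) \<and>
     (\<forall>i x. x \<ge> 0 \<longrightarrow> profit N lam R (mu(i := x)) i \<le> profit N lam R mu i)"

definition sigmoid :: "real \<Rightarrow> real" where
  "sigmoid x = 1 / (1 + exp (- x))"

definition platform_U :: "real \<Rightarrow> real \<Rightarrow> real \<Rightarrow> ('n::finite \<Rightarrow> real) \<Rightarrow> real" where
  "platform_U alpha beta R mu = alpha * (sigmoid (beta * (\<Sum>i\<in>UNIV. mu i)) - 1/2) - R"

definition is_SE :: "real \<Rightarrow> ('n::finite \<Rightarrow> real) \<Rightarrow> real \<Rightarrow> real \<Rightarrow> real \<Rightarrow> ('n \<Rightarrow> real) \<Rightarrow> real \<Rightarrow> bool" where
  "is_SE N lam B alpha beta mu R \<longleftrightarrow> R \<in> {0..B} \<and> is_NE N lam R mu \<and>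
     (\<forall>R'\<in>{0..B}. \<forall>mu'. is_NE N lam R' mu' \<longrightarrow>
        platform_U alpha beta R' mu' \<le> platform_U alpha beta R mu)"

end

(*
  For a reward R > 0 every miner plays a Tullock contest. Against a positive total T of
  the others, the payoff x / (x + T) * R N - lam x equals a constant minus
  R N T / y + lam y with y = x + T, which has a unique minimiser over y >= T; in
  fixed-point form, miner i holds the share max 0 (1 - lam_i S / (R N)) of the total S.
  Summing, t = S / (R N) solves sum_i max 0 (1 - lam_i t) = 1, whose left side is strictly
  decreasing where positive. Hence the equilibrium is unique and proportional to R (also
  for R = 0, where nobody mines; a miner facing no opponents has no best response at all).
  Along the equilibria the platform's utility is alpha (sigma (c R) - 1/2) - R with c > 0.
  The sigmoid is strictly concave on [0, oo), so this continuous function has exactly one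
  maximiser on [0, B].
*)

theory Submission
  imports Defs "HOL-Analysis.Line_Segment"
begin

definition best_response :: "real \<Rightarrow> real \<Rightarrow> real \<Rightarrow> real \<Rightarrow> bool" where
  "best_response V l T x0 \<longleftrightarrow> x0 \<ge> 0 \<and>
     (\<forall>x\<ge>0. x / (x + T) * V - l * x \<le> x0 / (x0 + T) * V - l * x0)"

lemma best_response_iff_minimizes:
  fixes V l T x0 :: real
  assumes "T > 0"
  shows "best_response V l T x0 \<longleftrightarrow>
    x0 \<ge> 0 \<and> (\<forall>y\<ge>T. V * T / (x0 + T) + l * (x0 + T) \<le> V * T / y + l * y)"
proof -
  have payoff: "x / (x + T) * V - l * x = V + l * T - (V * T / (x + T) + l * (x + T))"
    if "x \<ge> 0" for x
    using that assms by (simp add: field_simps)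
  have "(\<forall>x\<ge>0. x / (x + T) * V - l * x \<le> x0 / (x0 + T) * V - l * x0) \<longleftrightarrow>
      (\<forall>y\<ge>T. V * T / (x0 + T) + l * (x0 + T) \<le> V * T / y + l * y)" if "x0 \<ge> 0"
  proof safe
    fix y assume "\<forall>x\<ge>0. x / (x + T) * V - l * x \<le> x0 / (x0 + T) * V - l * x0" "T \<le> y"
    then show "V * T / (x0 + T) + l * (x0 + T) \<le> V * T / y + l * y"
      using payoff[of "y - T"] payoff[OF that] by (smt (verit))
  next
    fix x :: real assume "\<forall>y\<ge>T. V * T / (x0 + T) + l * (x0 + T) \<le> V * T / y + l * y" "0 \<le> x"
    then show "x / (x + T) * V - l * x \<le> x0 / (x0 + T) * V - l * x0"
      using payoff[of x] payoff[OF that] by (smt (verit))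
  qed
  then show ?thesis
    unfolding best_response_def by blast
qed

lemma reciprocal_plus_linear_diff:
  fixes c l y s :: real
  assumes "y \<noteq> 0" and "s \<noteq> 0"
  shows "(c / y + l * y) - (c / s + l * s) = (y - s) * (l * y * s - c) / (y * s)"
  using assms by (simp add: field_simps)

lemma best_response_if_fixed_point:
  fixes V l T x0 :: real
  assumes "V > 0" "l > 0" "T > 0" "x0 \<ge> 0"
    and fixed: "x0 = (x0 + T) * max 0 (1 - l * (x0 + T) / V)"
  shows "best_response V l T x0"
proof -
  define s where "s = x0 + T"
  have s: "s > 0" "s \<ge> T" using assms by (simp_all add: s_def)
  have fixed_s: "x0 = s * max 0 (1 - l * s / V)" using fixed by (simp add: s_def)
  have "V * T / s + l * s \<le> V * T / y + l * y" if y: "y \<ge> T" for y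
  proof -
    have "y > 0" using y \<open>T > 0\<close> by simp
    have "(y - s) * (l * y * s - V * T) / (y * s) \<ge> 0"
    proof (cases "l * s \<ge> V")
      case True
      then have "1 - l * s / V \<le> 0" using \<open>V > 0\<close> by (simp add: field_simps)
      then have "x0 = 0" using fixed_s by simp
      then have "s = T" by (simp add: s_def)
      have "l * s \<le> l * y" using \<open>s = T\<close> y \<open>l > 0\<close> by simp
      then have "l * y \<ge> V" using True by linarith
      have "(y - s) * (l * y * s - V * T) / (y * s) = (y - T) * (l * y - V) / y"
        using \<open>y > 0\<close> \<open>s = T\<close> s by (simp add: field_simps)
      then show ?thesis using y \<open>y > 0\<close> \<open>l * y \<ge> V\<close> by simp
    next
      case False
      then have "1 - l * s / V > 0" using \<open>V > 0\<close> by (simp add: field_simps)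
      then have "V * x0 = V * s - l * s * s"
        using fixed_s \<open>V > 0\<close> by (simp add: field_simps)
      then have "V * T = l * s * s" by (simp add: s_def algebra_simps)
      then have "(y - s) * (l * y * s - V * T) / (y * s) = l * (y - s)^2 / y"
        using \<open>y > 0\<close> s by (simp add: field_simps power2_eq_square)
      then show ?thesis using \<open>y > 0\<close> \<open>l > 0\<close> by simp
    qed
    then show ?thesis
      using reciprocal_plus_linear_diff[of y s "V * T" l] \<open>y > 0\<close> s by simp
  qed
  then show ?thesis
    using best_response_iff_minimizes \<open>T > 0\<close> \<open>x0 \<ge> 0\<close> by (simp add: s_def)
qed

lemma best_response_imp_fixed_point:
  fixes V l T x0 :: real
  assumes "V > 0" "l > 0" "T > 0" and br: "best_response V l T x0"
  shows "x0 = (x0 + T) * max 0 (1 - l * (x0 + T) / V)"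
proof -
  define s where "s = x0 + T"
  have "x0 \<ge> 0" using br by (simp add: best_response_def)
  then have s: "s > 0" "s \<ge> T" using assms by (simp_all add: s_def)
  have diff: "(y - s) * (l * y * s - V * T) / (y * s) \<ge> 0" if y: "y \<ge> T" for y
  proof -
    have "V * T / s + l * s \<le> V * T / y + l * y"
      using br y \<open>T > 0\<close> by (simp add: best_response_iff_minimizes s_def)
    moreover have "y \<noteq> 0" "s \<noteq> 0" using y s \<open>T > 0\<close> by auto
    ultimately show ?thesis using reciprocal_plus_linear_diff[of y s "V * T" l] by linarith
  qed
  show ?thesis
  proof (cases "l * T \<ge> V")
    case True
    have "s = T"
    proof (rule ccontr)
      assume "s \<noteq> T"
      then have "T - s < 0" and "l * s - V > 0"
        using s True \<open>l > 0\<close> mult_strict_left_mono[of T s l] by linarith+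
      have "(T - s) * (l * T * s - V * T) / (T * s) = (T - s) * (l * s - V) / s"
        using s \<open>T > 0\<close> by (simp add: field_simps)
      also have "\<dots> < 0"
        using \<open>T - s < 0\<close> \<open>l * s - V > 0\<close> s by (simp add: mult_neg_pos divide_neg_pos)
      finally show False using diff[of T] by simp
    qed
    moreover have "1 - l * T / V \<le> 0" using True \<open>V > 0\<close> by (simp add: field_simps)
    ultimately show ?thesis by (simp add: s_def)
  next
    case False
    \<comment> \<open>the unconstrained minimiser of \<open>V * T / y + l * y\<close>\<close>
    define m where "m = sqrt (V * T / l)"
    have "m * m = V * T / l" using assms by (simp add: m_def)
    then have m: "m > 0" "l * m * m = V * T"
      using assms by (simp_all add: m_def mult.assoc)
    have "T * T < V * T / l" using False assms by (simp add: field_simps)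
    then have "sqrt (T * T) < m" unfolding m_def by (rule real_sqrt_less_mono)
    then have "T < m" using \<open>T > 0\<close> by simp
    then have "(m - s) * (l * m * s - V * T) / (m * s) \<ge> 0" using diff by simp
    also have "(m - s) * (l * m * s - V * T) / (m * s) = - l * (m - s)^2 / s"
      using m s by (simp add: field_simps power2_eq_square)
    finally have "(m - s)^2 \<le> 0" using \<open>l > 0\<close> s by (simp add: divide_le_0_iff mult_le_0_iff)
    then have "s = m" by simp
    then have "V * T = l * s * s" using m by simp
    then have "V * x0 = V * s - l * s * s" by (simp add: s_def algebra_simps)
    then have "x0 = s * (1 - l * s / V)" using \<open>V > 0\<close> by (simp add: field_simps)
    moreover have "1 - l * s / V \<ge> 0"
      using \<open>x0 \<ge> 0\<close> s calculation by (simp add: zero_le_mult_iff)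
    ultimately show ?thesis by (simp add: s_def)
  qed
qed

lemma no_best_response_against_zero:
  fixes V l x0 :: real
  assumes "V > 0" "l > 0"
  shows "\<not> best_response V l 0 x0"
proof
  assume br: "best_response V l 0 x0"
  then have "x0 \<ge> 0"
    and opt: "\<And>x. x \<ge> 0 \<Longrightarrow> x / (x + 0) * V - l * x \<le> x0 / (x0 + 0) * V - l * x0"
    unfolding best_response_def by auto
  show False
  proof (cases "x0 = 0")
    case True
    have "V / (2 * l) / (V / (2 * l) + 0) * V - l * (V / (2 * l)) = V / 2"
      using assms by (simp add: field_simps)
    then show False using opt[of "V / (2 * l)"] True assms by simp
  next
    case False
    then show False using opt[of "x0 / 2"] \<open>x0 \<ge> 0\<close> assms by simp
  qed
qed

lemma best_response_zero_prize_iff: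
  fixes l T x0 :: real
  assumes "l > 0"
  shows "best_response 0 l T x0 \<longleftrightarrow> x0 = 0"
proof
  assume "best_response 0 l T x0"
  then have "x0 \<ge> 0" "0 \<le> - l * x0" unfolding best_response_def by auto
  then show "x0 = 0" using assms by (simp add: mult_le_0_iff)
qed (use assms in \<open>simp add: best_response_def\<close>)

definition share_total :: "('n::finite \<Rightarrow> real) \<Rightarrow> real \<Rightarrow> real" where
  "share_total lam t = (\<Sum>i\<in>UNIV. max 0 (1 - lam i * t))"

lemma share_total_strict_antimono:
  fixes lam :: "'n::finite \<Rightarrow> real"
  assumes lam: "\<And>i. lam i > 0" and "t1 < t2" and pos: "share_total lam t2 > 0"
  shows "share_total lam t2 < share_total lam t1"
proof -
  have "\<exists>i. 1 - lam i * t2 > 0"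
  proof (rule ccontr)
    assume "\<not> ?thesis"
    then have "share_total lam t2 = 0" by (simp add: share_total_def not_less)
    then show False using pos by simp
  qed
  then obtain i where i: "1 - lam i * t2 > 0" ..
  have le: "max 0 (1 - lam j * t2) \<le> max 0 (1 - lam j * t1)" for j
  proof -
    have "lam j * t1 \<le> lam j * t2" using lam[of j] \<open>t1 < t2\<close> by simp
    then show ?thesis by (intro max.mono) auto
  qed
  have "lam i * t1 < lam i * t2" using lam[of i] \<open>t1 < t2\<close> by simp
  then have lt: "max 0 (1 - lam i * t2) < max 0 (1 - lam i * t1)" using i by simp
  show ?thesis
    unfolding share_total_def by (rule sum_strict_mono_ex1) (use le lt in auto)
qed

lemma card_le_share_total:
  fixes lam :: "'n::finite \<Rightarrow> real"
  assumes lam: "\<And>i. lam i > 0" and "t \<le> 0"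
  shows "share_total lam t \<ge> CARD('n)"
proof -
  have "lam i * t \<le> 0" for i using lam[of i] \<open>t \<le> 0\<close> by (simp add: mult_nonneg_nonpos)
  then have one_le: "1 \<le> max 0 (1 - lam i * t)" for i by (simp add: le_max_iff_disj)
  have "(\<Sum>i\<in>(UNIV::'n set). (1::real)) \<le> (\<Sum>i\<in>UNIV. max 0 (1 - lam i * t))"
    by (rule sum_mono) (rule one_le)
  then show ?thesis by (simp add: share_total_def)
qed

lemma ex1_share_total_eq_1:
  fixes lam :: "'n::finite \<Rightarrow> real"
  assumes lam: "\<And>i. lam i > 0"
  shows "\<exists>!t. share_total lam t = 1"
proof (rule ex_ex1I)
  define b where "b = (\<Sum>j\<in>UNIV. 1 / lam j)"
  have "1 / lam i \<le> b" for i
    unfolding b_def using lam by (intro member_le_sum) (auto intro: less_imp_le)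
  then have "1 \<le> lam i * b" for i using lam[of i] by (simp add: divide_le_eq mult.commute)
  then have "max 0 (1 - lam i * b) = 0" for i by simp
  then have "share_total lam b = 0" unfolding share_total_def by simp
  moreover have "share_total lam 0 = CARD('n)" by (simp add: share_total_def)
  moreover have "0 \<le> b" unfolding b_def using lam by (simp add: sum_nonneg less_imp_le)
  moreover have "continuous_on {0..b} (share_total lam)"
    unfolding share_total_def by (intro continuous_intros)
  ultimately show "\<exists>t. share_total lam t = 1"
    using IVT2'[of "share_total lam" b 1 0] by auto
next
  have no_two_roots: False
    if "t1 < t2" "share_total lam t1 = 1" "share_total lam t2 = 1" for t1 t2
    using share_total_strict_antimono[of lam t1 t2] lam that by simp
  fix t1 t2 assume "share_total lam t1 = 1" "share_total lam t2 = 1"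
  then show "t1 = t2" using no_two_roots by (meson linorder_neqE)
qed

lemma share_total_eq_1_pos:
  fixes lam :: "'n::finite \<Rightarrow> real"
  assumes "\<And>i. lam i > 0" and "CARD('n) \<ge> 2" and "share_total lam t = 1"
  shows "t > 0"
  using card_le_share_total[of lam t] assms by force

lemma sum_fun_upd_UNIV:
  fixes f :: "'a::finite \<Rightarrow> 'b::ab_group_add"
  shows "(\<Sum>j\<in>UNIV. (f(i := x)) j) = (\<Sum>j\<in>UNIV. f j) - f i + x"
proof -
  have "f(i := x) = (\<lambda>j. f j + (if j = i then x - f i else 0))" by auto
  then show ?thesis by (simp add: sum.distrib)
qed

(* If the total vanishes, x / 0 = 0 agrees with the convention share = 0. *)
lemma profit_fun_upd:
  fixes mu :: "'n::finite \<Rightarrow> real"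
  shows "profit N lam R (mu(i := x)) i =
    x / (x + ((\<Sum>j\<in>UNIV. mu j) - mu i)) * (R * N) - lam i * x"
proof -
  have "(\<Sum>j\<in>UNIV. (mu(i := x)) j) = x + ((\<Sum>j\<in>UNIV. mu j) - mu i)"
    unfolding sum_fun_upd_UNIV by simp
  then show ?thesis unfolding profit_def share_def by simp
qed

lemma is_NE_iff_best_response:
  fixes mu :: "'n::finite \<Rightarrow> real"
  shows "is_NE N lam R mu \<longleftrightarrow>
    (\<forall>i. best_response (R * N) (lam i) ((\<Sum>j\<in>UNIV. mu j) - mu i) (mu i))"
proof -
  have "profit N lam R mu i =
      mu i / (mu i + ((\<Sum>j\<in>UNIV. mu j) - mu i)) * (R * N) - lam i * mu i" for i
    using profit_fun_upd[of N lam R mu i "mu i"] by simp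
  then show ?thesis
    unfolding is_NE_def best_response_def profit_fun_upd by auto
qed

lemma is_NE_zero_reward:
  fixes lam :: "'n::finite \<Rightarrow> real"
  assumes "\<And>i. lam i > 0"
  shows "is_NE N lam 0 mu \<longleftrightarrow> mu = (\<lambda>_. 0)"
  using assms by (auto simp: is_NE_iff_best_response best_response_zero_prize_iff)

lemma is_NE_pos_reward_unique:
  fixes lam :: "'n::finite \<Rightarrow> real"
  assumes lam: "\<And>i. lam i > 0" and "N > 0" "R > 0"
    and t: "share_total lam t = 1" and ne: "is_NE N lam R mu"
  shows "mu = (\<lambda>i. R * (N * t * max 0 (1 - lam i * t)))"
proof -
  define V where "V = R * N"
  define S where "S = (\<Sum>j\<in>UNIV. mu j)"
  have V: "V > 0" using \<open>N > 0\<close> \<open>R > 0\<close> by (simp add: V_def)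
  have br: "best_response V (lam i) (S - mu i) (mu i)" for i
    using ne by (simp add: is_NE_iff_best_response V_def S_def)
  then have nonneg: "mu i \<ge> 0" for i by (simp add: best_response_def)
  have others: "S - mu i > 0" for i
  proof -
    have "S - mu i = (\<Sum>j\<in>UNIV - {i}. mu j)" by (simp add: S_def sum_diff1)
    also have "\<dots> \<ge> 0" using nonneg by (simp add: sum_nonneg)
    finally have "S - mu i \<ge> 0" .
    moreover have "S - mu i \<noteq> 0"
      using no_best_response_against_zero[OF V lam[of i], of "mu i"] br[of i] by auto
    ultimately show ?thesis by simp
  qed
  have fixed: "mu i = S * max 0 (1 - lam i * (S / V))" for i
    using best_response_imp_fixed_point[OF V lam[of i] others[of i] br[of i]] by simp
  have "S > 0" using others[of undefined] nonneg[of undefined] by linarith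
  have "(\<Sum>i\<in>UNIV. mu i) = (\<Sum>i\<in>UNIV. S * max 0 (1 - lam i * (S / V)))"
    using fixed by (intro sum.cong) auto
  with S_def have "S = (\<Sum>i\<in>UNIV. S * max 0 (1 - lam i * (S / V)))" by (rule trans)
  then have "S = S * share_total lam (S / V)"
    by (simp add: share_total_def sum_distrib_left)
  then have "share_total lam (S / V) = 1" using \<open>S > 0\<close> by simp
  then have "S / V = t" using ex1_share_total_eq_1[of lam] lam t by blast
  then have "S = V * t" using V by (auto simp: divide_eq_eq)
  then show ?thesis using fixed \<open>S / V = t\<close> by (simp add: fun_eq_iff V_def)
qed

lemma is_NE_pos_reward_profile:
  fixes lam :: "'n::finite \<Rightarrow> real"
  assumes lam: "\<And>i. lam i > 0" and "N > 0" "R > 0" and "CARD('n) \<ge> 2"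
    and t: "share_total lam t = 1"
  shows "is_NE N lam R (\<lambda>i. R * (N * t * max 0 (1 - lam i * t)))"
proof -
  define V where "V = R * N"
  define mu where "mu = (\<lambda>i. V * t * max 0 (1 - lam i * t))"
  have "t > 0" using share_total_eq_1_pos[OF lam \<open>CARD('n) \<ge> 2\<close> t] .
  have V: "V > 0" using \<open>N > 0\<close> \<open>R > 0\<close> by (simp add: V_def)
  have "(\<Sum>j\<in>UNIV. mu j) = V * t * share_total lam t"
    unfolding mu_def share_total_def by (simp add: sum_distrib_left)
  then have sum: "(\<Sum>j\<in>UNIV. mu j) = V * t" using t by simp
  have "best_response V (lam i) (V * t - mu i) (mu i)" for i
  proof (rule best_response_if_fixed_point[OF V lam[of i]])
    show "V * t - mu i > 0"
    proof (cases "1 - lam i * t \<le> 0")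
      case True
      then show ?thesis using V \<open>t > 0\<close> by (simp add: mu_def)
    next
      case False
      then have "V * t - mu i = V * t * (lam i * t)" by (simp add: mu_def algebra_simps)
      then show ?thesis using V \<open>t > 0\<close> lam[of i] by simp
    qed
    show "mu i \<ge> 0" using V \<open>t > 0\<close> by (simp add: mu_def)
    show "mu i = (mu i + (V * t - mu i)) * max 0 (1 - lam i * (mu i + (V * t - mu i)) / V)"
      using V by (simp add: mu_def)
  qed
  then have "is_NE N lam R mu" by (simp add: is_NE_iff_best_response sum V_def)
  then show ?thesis unfolding mu_def V_def by (simp add: mult.assoc)
qed

lemma is_NE_iff:
  fixes lam :: "'n::finite \<Rightarrow> real"
  assumes "\<And>i. lam i > 0" and "N > 0" and "CARD('n) \<ge> 2"
    and "share_total lam t = 1" and "R \<ge> 0"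
  shows "is_NE N lam R mu \<longleftrightarrow> mu = (\<lambda>i. R * (N * t * max 0 (1 - lam i * t)))"
proof (cases "R = 0")
  case True
  then show ?thesis using is_NE_zero_reward[of lam N mu] assms by simp
next
  case False
  with \<open>R \<ge> 0\<close> have "R > 0" by simp
  show ?thesis
  proof
    assume "is_NE N lam R mu"
    then show "mu = (\<lambda>i. R * (N * t * max 0 (1 - lam i * t)))"
      by (rule is_NE_pos_reward_unique[OF assms(1,2) \<open>R > 0\<close> assms(4)])
  next
    assume "mu = (\<lambda>i. R * (N * t * max 0 (1 - lam i * t)))"
    then show "is_NE N lam R mu"
      using is_NE_pos_reward_profile[OF assms(1,2) \<open>R > 0\<close> assms(3,4)] by simp
  qed
qed

lemma continuous_on_sigmoid: "continuous_on S sigmoid"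
proof -
  have "1 + exp (- x) \<noteq> 0" for x :: real
    using exp_gt_zero[of "- x"] by linarith
  then show ?thesis unfolding sigmoid_def by (intro continuous_intros) auto
qed

lemma sigmoid_strict_midpoint_concave:
  fixes a b :: real
  assumes "0 \<le> a" "0 \<le> b" "a \<noteq> b"
  shows "(sigmoid a + sigmoid b) / 2 < sigmoid ((a + b) / 2)"
proof -
  define p where "p = exp (- a / 2)"
  define q where "q = exp (- b / 2)"
  have sig: "sigmoid a = 1 / (1 + p * p)" "sigmoid b = 1 / (1 + q * q)"
    "sigmoid ((a + b) / 2) = 1 / (1 + p * q)"
    unfolding sigmoid_def p_def q_def by (simp_all add: field_simps flip: exp_add)
  have "p > 0" "q > 0" by (simp_all add: p_def q_def)
  have "p \<noteq> q" using \<open>a \<noteq> b\<close> by (simp add: p_def q_def)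
  have "p * q < 1"
    using assms by (simp add: p_def q_def flip: exp_add)
  have denom: "1 + p * p > 0" "1 + q * q > 0" "1 + p * q > 0"
    using \<open>p > 0\<close> \<open>q > 0\<close> by (simp_all add: add_pos_pos)
  have common_denom: "1 / A + 1 / B - 2 / C = (B * C + A * C - 2 * (A * B)) / (A * B * C)"
    if "A \<noteq> 0" "B \<noteq> 0" "C \<noteq> 0" for A B C :: real
    using that by (simp add: field_simps)
  have "1 / (1 + p * p) + 1 / (1 + q * q) - 2 / (1 + p * q)
      = ((1 + q * q) * (1 + p * q) + (1 + p * p) * (1 + p * q) - 2 * ((1 + p * p) * (1 + q * q)))
        / ((1 + p * p) * (1 + q * q) * (1 + p * q))"
    using denom by (intro common_denom) simp_all
  also have "(1 + q * q) * (1 + p * q) + (1 + p * p) * (1 + p * q) - 2 * ((1 + p * p) * (1 + q * q))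
      = (p - q)^2 * (p * q - 1)"
    by (simp add: power2_eq_square algebra_simps)
  also have "(p - q)^2 * (p * q - 1) / ((1 + p * p) * (1 + q * q) * (1 + p * q)) < 0"
    using \<open>p \<noteq> q\<close> \<open>p * q < 1\<close> denom by (intro divide_neg_pos mult_pos_neg) simp_all
  finally show ?thesis unfolding sig by simp
qed

lemma strict_midpoint_concave_ex1_max:
  fixes f :: "'a::real_normed_vector \<Rightarrow> real"
  assumes "compact S" "convex S" "S \<noteq> {}" "continuous_on S f"
    and strict: "\<And>x y. x \<in> S \<Longrightarrow> y \<in> S \<Longrightarrow> x \<noteq> y \<Longrightarrow>
      (f x + f y) / 2 < f (midpoint x y)"
  shows "\<exists>!x. x \<in> S \<and> (\<forall>y\<in>S. f y \<le> f x)"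
proof (rule ex_ex1I)
  show "\<exists>x. x \<in> S \<and> (\<forall>y\<in>S. f y \<le> f x)"
    using continuous_attains_sup[OF assms(1,3,4)] by blast
next
  fix x y
  assume x: "x \<in> S \<and> (\<forall>z\<in>S. f z \<le> f x)" and y: "y \<in> S \<and> (\<forall>z\<in>S. f z \<le> f y)"
  have "midpoint x y \<in> S"
    using convexD[OF \<open>convex S\<close>, of x y "1/2" "1/2"] x y
    by (simp add: midpoint_def scaleR_add_right)
  then show "x = y"
    using strict[of x y] x y by force
qed

lemma continuous_on_platform_U_ray:
  "continuous_on S (\<lambda>R. platform_U alpha beta R (\<lambda>i. R * m i))"
  unfolding platform_U_def
  by (intro continuous_intros continuous_on_compose2[OF continuous_on_sigmoid]) auto

lemma platform_U_ray_strict_midpoint_concave: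
  fixes m :: "'n::finite \<Rightarrow> real"
  assumes "alpha > 0" and c: "beta * (\<Sum>i\<in>UNIV. m i) > 0" and "x \<ge> 0" "y \<ge> 0" "x \<noteq> y"
  shows "(platform_U alpha beta x (\<lambda>i. x * m i) + platform_U alpha beta y (\<lambda>i. y * m i)) / 2
    < platform_U alpha beta (midpoint x y) (\<lambda>i. midpoint x y * m i)"
proof -
  define c where "c = beta * (\<Sum>i\<in>UNIV. m i)"
  have ray: "platform_U alpha beta R (\<lambda>i. R * m i) = alpha * (sigmoid (c * R) - 1 / 2) - R" for R
    by (simp add: platform_U_def c_def sum_distrib_left[symmetric] ac_simps)
  have "c > 0" using c by (simp add: c_def)
  have mid: "midpoint x y = (x + y) / 2" by (simp add: midpoint_def)
  have cmid: "c * ((x + y) / 2) = (c * x + c * y) / 2" by (simp add: field_simps)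
  have "(sigmoid (c * x) + sigmoid (c * y)) / 2 < sigmoid (c * ((x + y) / 2))"
    unfolding cmid using \<open>c > 0\<close> assms(3-5) by (intro sigmoid_strict_midpoint_concave) simp_all
  then have "alpha * ((sigmoid (c * x) + sigmoid (c * y)) / 2)
      < alpha * sigmoid (c * ((x + y) / 2))"
    using \<open>alpha > 0\<close> by (rule mult_strict_left_mono)
  moreover have
    "(platform_U alpha beta x (\<lambda>i. x * m i) + platform_U alpha beta y (\<lambda>i. y * m i)) / 2
      = alpha * ((sigmoid (c * x) + sigmoid (c * y)) / 2) - alpha / 2 - (x + y) / 2"
    unfolding ray by (simp add: field_simps)
  moreover have "platform_U alpha beta (midpoint x y) (\<lambda>i. midpoint x y * m i)
      = alpha * sigmoid (c * ((x + y) / 2)) - alpha / 2 - (x + y) / 2"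
    unfolding ray mid by (simp add: algebra_simps)
  ultimately show ?thesis by linarith
qed

lemma ex1_is_SE_iff_ex1_maximizer:
  assumes "\<And>R mu. R \<in> {0..B} \<Longrightarrow> is_NE N lam R mu \<longleftrightarrow> mu = ne R"
  shows "(\<exists>!(mu, R). is_SE N lam B alpha beta mu R) \<longleftrightarrow>
    (\<exists>!R. R \<in> {0..B} \<and>
      (\<forall>R'\<in>{0..B}. platform_U alpha beta R' (ne R') \<le> platform_U alpha beta R (ne R)))"
    (is "_ \<longleftrightarrow> (\<exists>!R. ?max R)")
proof -
  have "is_SE N lam B alpha beta mu R \<longleftrightarrow> mu = ne R \<and> ?max R" for mu R
    unfolding is_SE_def using assms by auto
  then show ?thesis by (auto simp: Ex1_def)
qed

theorem theorem4:
  fixes N B alpha beta :: real and lam :: "'n::finite \<Rightarrow> real"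
  assumes "CARD('n) \<ge> 2" and "N > 0" and "B > 0" and "alpha > 1"
    and "0 < beta" and "beta < 1" and "\<And>i. lam i > 0"
  shows "\<exists>!(mu, R). is_SE N lam B alpha beta mu R"
proof -
  obtain t where t: "share_total lam t = 1"
    using ex1_share_total_eq_1[of lam] assms(7) by blast
  define m where "m = (\<lambda>i. N * t * max 0 (1 - lam i * t))"
  have NE: "is_NE N lam R mu \<longleftrightarrow> mu = (\<lambda>i. R * m i)" if "R \<in> {0..B}" for R mu
    using is_NE_iff[of lam N t R mu] assms that t by (simp add: m_def)
  have "(\<Sum>i\<in>UNIV. m i) = N * t"
    using t by (simp add: m_def share_total_def flip: sum_distrib_left)
  moreover have "t > 0" using share_total_eq_1_pos[of lam t] assms t by blast
  ultimately have "beta * (\<Sum>i\<in>UNIV. m i) > 0" using assms by simp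
  then have "\<exists>!R. R \<in> {0..B} \<and>
      (\<forall>R'\<in>{0..B}.
        platform_U alpha beta R' (\<lambda>i. R' * m i) \<le> platform_U alpha beta R (\<lambda>i. R * m i))"
    (is "\<exists>!R. ?maximizer R")
    using assms by (intro strict_midpoint_concave_ex1_max continuous_on_platform_U_ray
        platform_U_ray_strict_midpoint_concave) auto
  moreover have "(\<exists>!(mu, R). is_SE N lam B alpha beta mu R) \<longleftrightarrow> (\<exists>!R. ?maximizer R)"
    by (rule ex1_is_SE_iff_ex1_maximizer) (rule NE)
  ultimately show ?thesis by simp
qed

end
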